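(* Let $X$ and $Y$ be $n\times n$ Hermitian matrices whose Thompson metric $d=d_T(X,Y)$ is finite, and let $1\le p\le\infty$. Then $$\|X-Y\|_p\;\le\;2^{\frac1p}\,\frac{e^d-1}{e^d}\,\max\big[\|X\|_p,\|Y\|_p\big].$$
   Context: For Hermitian matrices $A,B$, write $A\le B$ (Löwner order) if $B-A$ is positive semidefinite. The Thompson metric of Hermitian matrices $X,Y$ is $d_T(X,Y)=\inf\{\log\alpha:\ \alpha\ge 1,\ X\le\alpha Y,\ Y\le \alpha X\}$, with $d_T(X,Y)=+\infty$ if no such $\alpha$ exists. For positive semidefinite $X,Y$ this is the usual $\log\max\{M(X/Y),M(Y/X)\}$, where $M(X/Y)=\inf\{\lambda>0: X\le\lambda Y\}$. For a Hermitian matrix $M$ with eigenvalues $\mu_1\ge\dots\ge\mu_n$, the Schatten $p$-norm is $\|M\|_p=(\sum_{i=1}^n|\mu_i|^p)^{1/p}$ for $1\le p<\infty$. For $p=\infty$ it is $\max_i|\mu_i|$ (the spectral norm), and $2^{1/\infty}=1$. *)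

theory Defs
  imports "Jordan_Normal_Form.Char_Poly" "HOL-Computational_Algebra.Polynomial" "HOL-Library.Extended_Real"
begin

definition hermitian :: "complex mat \<Rightarrow> bool" where
  "hermitian A \<longleftrightarrow> dim_row A = dim_col A \<and>
     (\<forall>i<dim_row A. \<forall>j<dim_row A. A $$ (i, j) = cnj (A $$ (j, i)))"

text \<open>Positive semidefinite: Hermitian with v^* A v \<ge> 0 for all v (the form is real for Hermitian A).\<close>
definition psd :: "complex mat \<Rightarrow> bool" where
  "psd A \<longleftrightarrow> hermitian A \<and>
     (\<forall>v. dim_vec v = dim_row A \<longrightarrow>
        0 \<le> Re (\<Sum>i<dim_row A. \<Sum>j<dim_row A. cnj (v $ i) * A $$ (i, j) * v $ j))"

definition loewner_le :: "complex mat \<Rightarrow> complex mat \<Rightarrow> bool" where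
  "loewner_le A B \<longleftrightarrow> dim_row A = dim_row B \<and> dim_col A = dim_col B \<and> psd (B - A)"

text \<open>Thompson metric, with value +\<infinity> when no admissible \<alpha> exists (Inf of the empty set).\<close>
definition thompson :: "complex mat \<Rightarrow> complex mat \<Rightarrow> ereal" where
  "thompson X Y = Inf ((\<lambda>\<alpha>. ereal (ln \<alpha>)) `
     {\<alpha>::real. 1 \<le> \<alpha> \<and> loewner_le X (complex_of_real \<alpha> \<cdot>\<^sub>m Y) \<and> loewner_le Y (complex_of_real \<alpha> \<cdot>\<^sub>m X)})"

definition eigvals :: "complex mat \<Rightarrow> complex multiset" where
  "eigvals A = proots (char_poly A)"

definition schatten_norm :: "ereal \<Rightarrow> complex mat \<Rightarrow> real" where
  "schatten_norm p M =
     (if p = \<infinity> then Max (insert 0 (cmod ` set_mset (eigvals M)))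
      else (\<Sum>\<^sub># (image_mset (\<lambda>\<mu>. cmod \<mu> powr real_of_ereal p) (eigvals M)))
             powr (1 / real_of_ereal p))"

definition two_pow_inv :: "ereal \<Rightarrow> real" where
  "two_pow_inv p = (if p = \<infinity> then 1 else 2 powr (1 / real_of_ereal p))"

end

theory Submission
  imports Defs "Jordan_Normal_Form.Schur_Decomposition" "HOL-Analysis.Convex"
    "HOL-Computational_Algebra.Fundamental_Theorem_Algebra"
begin

text \<open>
  Fix \<open>\<alpha> \<ge> 1\<close> with \<open>X \<le> \<alpha> Y\<close> and \<open>Y \<le> \<alpha> X\<close>, and let \<open>u\<^sub>k\<close> be an orthonormal eigenbasis of
  \<open>X - Y\<close> with eigenvalues \<open>\<lambda>\<^sub>k\<close>. With \<open>x\<^sub>k = u\<^sub>k\<^sup>* X u\<^sub>k\<close> and \<open>y\<^sub>k = u\<^sub>k\<^sup>* Y u\<^sub>k\<close> we have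
  \<open>\<lambda>\<^sub>k = x\<^sub>k - y\<^sub>k\<close>, \<open>x\<^sub>k \<le> \<alpha> y\<^sub>k\<close> and \<open>y\<^sub>k \<le> \<alpha> x\<^sub>k\<close>, hence
  \<open>|\<lambda>\<^sub>k| \<le> (1 - 1/\<alpha>) max |x\<^sub>k| |y\<^sub>k|\<close>. The diagonal \<open>(x\<^sub>k)\<close> of \<open>X\<close> in any orthonormal basis
  arises from the eigenvalues of \<open>X\<close> through a doubly stochastic matrix (squared moduli of the
  entries of a unitary matrix), so Jensen's inequality gives \<open>\<Sum>\<^sub>k |x\<^sub>k|\<^sup>p \<le> \<parallel>X\<parallel>\<^sub>p\<^sup>p\<close> and
  \<open>|x\<^sub>k| \<le> \<parallel>X\<parallel>\<^sub>\<infinity>\<close>; likewise for \<open>Y\<close>. This yields the bound with the factor \<open>1 - 1/\<alpha>\<close>, and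
  \<open>ln \<alpha>\<close> can be taken arbitrarily close to \<open>d\<close>, giving \<open>1 - e\<^sup>-\<^sup>d\<close>.
\<close>

section \<open>Adjoints and unitary matrices\<close>

lemma mat_adjoint_dim [simp]:
  "dim_row (mat_adjoint A) = dim_col A" "dim_col (mat_adjoint A) = dim_row A"
  by (simp_all add: mat_adjoint_def)

lemma mat_adjoint_index [simp]:
  "i < dim_col A \<Longrightarrow> j < dim_row A \<Longrightarrow> mat_adjoint A $$ (i, j) = cnj (A $$ (j, i))"
  by (simp add: mat_adjoint_def mat_of_rows_index)

lemma mat_adjoint_carrier [simp]: "A \<in> carrier_mat n m \<Longrightarrow> mat_adjoint A \<in> carrier_mat m n"
  by (simp only: carrier_mat_def mem_Collect_eq mat_adjoint_dim)

lemma mat_adjoint_adjoint [simp]: "mat_adjoint (mat_adjoint (A :: complex mat)) = A"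
  by (rule eq_matI) simp_all

lemma mat_adjoint_one [simp]: "mat_adjoint (1\<^sub>m n :: complex mat) = 1\<^sub>m n"
  by (rule eq_matI) simp_all

lemma mat_adjoint_mult:
  assumes "A \<in> carrier_mat n k" "B \<in> carrier_mat k m"
  shows "mat_adjoint (A * B) = mat_adjoint B * mat_adjoint (A :: complex mat)"
proof (rule eq_matI)
  fix i j assume "i < dim_row (mat_adjoint B * mat_adjoint A)" "j < dim_col (mat_adjoint B * mat_adjoint A)"
  with assms show "mat_adjoint (A * B) $$ (i, j) = (mat_adjoint B * mat_adjoint A) $$ (i, j)"
    by (simp add: scalar_prod_def mult.commute)
qed (use assms in simp_all)

lemma hermitianD:
  "hermitian A \<Longrightarrow> i < dim_row A \<Longrightarrow> j < dim_row A \<Longrightarrow> A $$ (i, j) = cnj (A $$ (j, i))"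
  unfolding hermitian_def by blast

lemma hermitian_iff_mat_adjoint:
  "hermitian A \<longleftrightarrow> dim_row A = dim_col A \<and> mat_adjoint A = A"
proof
  assume h: "hermitian A"
  then have d: "dim_row A = dim_col A" by (simp add: hermitian_def)
  moreover have "mat_adjoint A = A"
  proof (rule eq_matI)
    fix i j assume "i < dim_row A" "j < dim_col A"
    with d show "mat_adjoint A $$ (i, j) = A $$ (i, j)"
      using hermitianD[OF h, of j i] by simp
  qed (use d in simp_all)
  ultimately show "dim_row A = dim_col A \<and> mat_adjoint A = A" ..
next
  assume "dim_row A = dim_col A \<and> mat_adjoint A = A"
  then show "hermitian A"
    unfolding hermitian_def by (metis mat_adjoint_index)
qed

lemma hermitian_diff:
  assumes "X \<in> carrier_mat n n" "Y \<in> carrier_mat n n" "hermitian X" "hermitian Y"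
  shows "hermitian (X - Y)"
  unfolding hermitian_def
proof (intro conjI allI impI)
  fix i j assume "i < dim_row (X - Y)" "j < dim_row (X - Y)"
  with assms show "(X - Y) $$ (i, j) = cnj ((X - Y) $$ (j, i))"
    using hermitianD[of X i j] hermitianD[of Y i j] by simp
qed (use assms in simp)

lemma hermitian_mat_adjoint_conj:
  assumes A: "A \<in> carrier_mat n n" "hermitian A" and W: "W \<in> carrier_mat n k"
  shows "hermitian (mat_adjoint W * A * W)"
proof -
  have "mat_adjoint (mat_adjoint W * A * W) = mat_adjoint W * mat_adjoint (mat_adjoint W * A)"
    using A W by (intro mat_adjoint_mult[of _ k n]) auto
  also have "mat_adjoint (mat_adjoint W * A) = mat_adjoint A * W"
    using A W by (simp add: mat_adjoint_mult[of _ k n _ n])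
  also have "mat_adjoint A = A" using A(2) by (simp add: hermitian_iff_mat_adjoint)
  finally have "mat_adjoint (mat_adjoint W * A * W) = mat_adjoint W * A * W"
    using A W by (simp add: assoc_mult_mat[of _ k n _ n _ k])
  then show ?thesis using A W by (simp add: hermitian_iff_mat_adjoint)
qed

definition unitary :: "nat \<Rightarrow> complex mat \<Rightarrow> bool" where
  "unitary n U \<longleftrightarrow> U \<in> carrier_mat n n \<and> mat_adjoint U * U = 1\<^sub>m n"

lemma unitaryD:
  assumes "unitary n U"
  shows "U \<in> carrier_mat n n" "mat_adjoint U * U = 1\<^sub>m n" "U * mat_adjoint U = 1\<^sub>m n"
  using assms mat_mult_left_right_inverse[of "mat_adjoint U" n U]
  by (auto simp: unitary_def)

lemma unitary_mat_adjoint: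
  assumes "unitary n U"
  shows "unitary n (mat_adjoint U)"
  unfolding unitary_def mat_adjoint_adjoint
  using mat_adjoint_carrier[OF unitaryD(1)[OF assms]] unitaryD(3)[OF assms] ..

lemma unitary_mult:
  assumes "unitary n U" "unitary n V"
  shows "unitary n (U * V)"
proof -
  note U = unitaryD[OF assms(1)] and V = unitaryD[OF assms(2)]
  have "mat_adjoint U * (U * V) = V"
    using U V by (simp add: assoc_mult_mat[symmetric, of "mat_adjoint U" n n U n V n])
  then have "mat_adjoint (U * V) * (U * V) = 1\<^sub>m n"
    using U V by (simp add: mat_adjoint_mult[of _ n n] assoc_mult_mat[of _ n n _ n _ n])
  then show ?thesis using U V by (simp add: unitary_def)
qed

lemma unitary_similar_mat_wit:
  assumes W: "unitary n W" and A: "A \<in> carrier_mat n n"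
  shows "similar_mat_wit A (mat_adjoint W * A * W) W (mat_adjoint W)"
proof -
  note Wu = unitaryD[OF W]
  have "W * (mat_adjoint W * A * W) = W * (mat_adjoint W * A) * W"
    by (rule assoc_mult_mat[symmetric]) (use Wu(1) A in auto)
  also have "W * (mat_adjoint W * A) = A"
    using Wu A by (simp add: assoc_mult_mat[symmetric, of W n n "mat_adjoint W" n A n])
  finally have "W * (mat_adjoint W * A * W) * mat_adjoint W = A * (W * mat_adjoint W)"
    using Wu(1) A by (simp add: assoc_mult_mat[of _ n n _ n _ n])
  then have "A = W * (mat_adjoint W * A * W) * mat_adjoint W"
    using Wu(3) A by simp
  with Wu A show ?thesis by (intro similar_mat_witI[of _ _ n]) auto
qed

lemma cscalar_prod_smult:
  fixes v w :: "complex vec"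
  assumes "v \<in> carrier_vec n" "w \<in> carrier_vec n"
  shows "(a \<cdot>\<^sub>v v) \<bullet>c (b \<cdot>\<^sub>v w) = a * cnj b * (v \<bullet>c w)"
  using assms by (simp add: scalar_prod_def sum_distrib_left mult_ac)

lemma unitary_mat_of_cols:
  assumes ws: "set ws \<subseteq> carrier_vec n" "length ws = n"
    and orthonormal: "\<And>i j. i < n \<Longrightarrow> j < n \<Longrightarrow> ws ! i \<bullet>c ws ! j = (if i = j then 1 else 0)"
  shows "unitary n (mat_of_cols n ws)"
proof -
  let ?W = "mat_of_cols n ws"
  have "mat_adjoint ?W * ?W = 1\<^sub>m n"
  proof (rule eq_matI)
    fix i j assume "i < dim_row (1\<^sub>m n :: complex mat)" "j < dim_col (1\<^sub>m n :: complex mat)"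
    then have ij: "i < n" "j < n" by auto
    then have "ws ! i \<in> carrier_vec n" "ws ! j \<in> carrier_vec n" using ws by auto
    with ij have "(mat_adjoint ?W * ?W) $$ (i, j) = ws ! j \<bullet>c ws ! i"
      using ws by (auto simp: scalar_prod_def mat_of_cols_index mult.commute intro: sum.cong)
    then show "(mat_adjoint ?W * ?W) $$ (i, j) = 1\<^sub>m n $$ (i, j)"
      using orthonormal[of j i] ij by auto
  qed (use ws in auto)
  then show ?thesis using ws mat_of_cols_carrier(1)[of n ws] by (simp add: unitary_def)
qed

section \<open>The spectral theorem for Hermitian matrices\<close>

definition normalize_vec :: "complex vec \<Rightarrow> complex vec" where
  "normalize_vec w = complex_of_real (1 / sqrt (Re (w \<bullet>c w))) \<cdot>\<^sub>v w"

lemma normalize_vec_carrier [simp]: "w \<in> carrier_vec n \<Longrightarrow> normalize_vec w \<in> carrier_vec n"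
  by (simp add: normalize_vec_def)

lemma normalize_vec_cscalar_prod:
  assumes "v \<in> carrier_vec n" "w \<in> carrier_vec n"
  shows "normalize_vec v \<bullet>c normalize_vec w =
    complex_of_real (1 / sqrt (Re (v \<bullet>c v)) * (1 / sqrt (Re (w \<bullet>c w)))) * (v \<bullet>c w)"
  unfolding normalize_vec_def cscalar_prod_smult[OF assms] by simp

lemma normalize_vec_unit:
  assumes "w \<in> carrier_vec n" "w \<noteq> 0\<^sub>v n"
  shows "normalize_vec w \<bullet>c normalize_vec w = 1"
proof -
  have "w \<bullet>c w > 0" using assms by simp
  then obtain r where r: "w \<bullet>c w = complex_of_real r" "r > 0"
    by (auto simp: less_complex_def complex_eq_iff)
  then show ?thesis using normalize_vec_cscalar_prod[OF assms(1,1)] by simp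
qed

lemma normalize_vec_of_unit: "w \<bullet>c w = 1 \<Longrightarrow> normalize_vec w = w"
  by (simp add: normalize_vec_def)

lemma normalize_vec_corthogonal:
  assumes gs: "set gs \<subseteq> carrier_vec n" "corthogonal gs" and ij: "i < length gs" "j < length gs"
  shows "normalize_vec (gs ! i) \<bullet>c normalize_vec (gs ! j) = (if i = j then 1 else 0)"
proof -
  have carrier: "gs ! i \<in> carrier_vec n" "gs ! j \<in> carrier_vec n" using gs ij by auto
  show ?thesis
  proof (cases "i = j")
    case True
    have "gs ! i \<noteq> 0\<^sub>v n" using corthogonalD[OF gs(2) ij(1) ij(1)] carrier(1) by auto
    with True show ?thesis using normalize_vec_unit[OF carrier(1)] by simp
  next
    case False
    then have "gs ! i \<bullet>c gs ! j = 0" using corthogonalD[OF gs(2) ij] by simp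
    then show ?thesis using False normalize_vec_cscalar_prod[OF carrier] by simp
  qed
qed

lemma unitary_with_first_col:
  fixes v :: "complex vec"
  assumes v: "v \<in> carrier_vec n" and unit: "v \<bullet>c v = 1"
  obtains W where "unitary n W" "col W 0 = v"
proof -
  have v0: "v \<noteq> 0\<^sub>v n" using unit v by auto
  then have n: "0 < n" using v by (cases n) auto
  interpret cof_vec_space n "TYPE(complex)" .
  define b where "b = basis_completion v"
  from basis_completion[OF v v0, folded b_def]
  have b: "distinct b" "\<not> lin_dep (set b)" "set b \<subseteq> carrier_vec n" "hd b = v" "length b = n"
    by auto
  define gs where "gs = gram_schmidt n b"
  from gram_schmidt_result[OF b(3,1,2) gs_def]
  have gs: "set gs \<subseteq> carrier_vec n" "corthogonal gs" "length gs = n"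
    by (auto simp: b(5))
  have "hd gs = v"
    using b(4,5) n v unfolding gs_def by (cases b) auto
  then have "gs ! 0 = v"
    using gs(3) n by (metis hd_conv_nth list.size(3) not_less_zero)
  define ws where "ws = map normalize_vec gs"
  have ws: "set ws \<subseteq> carrier_vec n" "length ws = n"
    using gs by (auto simp: ws_def)
  have "ws ! i \<bullet>c ws ! j = (if i = j then 1 else 0)" if "i < n" "j < n" for i j
    using normalize_vec_corthogonal[OF gs(1,2)] that gs(3) by (simp add: ws_def)
  from unitary_mat_of_cols[OF ws this] have "unitary n (mat_of_cols n ws)" .
  moreover have "ws ! 0 = v"
    using n \<open>gs ! 0 = v\<close> unit gs(3) by (simp add: ws_def normalize_vec_of_unit)
  then have "col (mat_of_cols n ws) 0 = v"
    using ws n v by (intro trans[OF col_mat_of_cols]) auto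
  ultimately show ?thesis by (rule that)
qed

lemma unit_eigenvector_exists:
  fixes A :: "complex mat"
  assumes A: "A \<in> carrier_mat n n" and n: "0 < n"
  obtains e v where "v \<in> carrier_vec n" "v \<bullet>c v = 1" "A *\<^sub>v v = e \<cdot>\<^sub>v v"
proof -
  have "degree (char_poly A) = n" using degree_monic_char_poly[OF A] by simp
  then have "\<not> constant (poly (char_poly A))" using n by (simp add: constant_degree)
  then obtain e where "poly (char_poly A) e = 0" using fundamental_theorem_of_algebra by blast
  then have "eigenvalue A e" using eigenvalue_root_char_poly[OF A] by simp
  then obtain w where "eigenvector A w e" unfolding eigenvalue_def by blast
  then have w: "w \<in> carrier_vec n" "w \<noteq> 0\<^sub>v n" "A *\<^sub>v w = e \<cdot>\<^sub>v w"
    unfolding eigenvector_def using A by auto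
  have "A *\<^sub>v normalize_vec w = e \<cdot>\<^sub>v normalize_vec w"
    using w A by (simp add: normalize_vec_def mult_mat_vec smult_smult_assoc mult.commute)
  with w normalize_vec_unit[OF w(1,2)] show ?thesis by (intro that[of "normalize_vec w"]) simp_all
qed

lemma mat_adjoint_conj_first_col:
  fixes A :: "complex mat"
  assumes A: "A \<in> carrier_mat n n" and W: "unitary n W" and n: "0 < n"
    and eig: "A *\<^sub>v col W 0 = e \<cdot>\<^sub>v col W 0" and i: "i < n"
  shows "(mat_adjoint W * A * W) $$ (i, 0) = (if i = 0 then e else 0)"
proof -
  note Wu = unitaryD[OF W]
  have "(mat_adjoint W * A * W) $$ (i, 0) = row (mat_adjoint W) i \<bullet> col (A * W) 0"
    using A Wu i n by (simp add: assoc_mult_mat[of _ n n A n W n])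
  also have "col (A * W) 0 = A *\<^sub>v col W 0"
    using A Wu(1) n by (rule col_mult2)
  also have "\<dots> = e \<cdot>\<^sub>v col W 0" by (rule eig)
  also have "row (mat_adjoint W) i \<bullet> (e \<cdot>\<^sub>v col W 0) = e * (mat_adjoint W * W) $$ (i, 0)"
    using Wu(1) i n by (simp add: scalar_prod_smult_distrib[of _ n])
  finally show ?thesis using Wu(2) i n by simp
qed

lemma hermitian_first_col_block:
  fixes A :: "complex mat"
  assumes A: "A \<in> carrier_mat (Suc m) (Suc m)" "hermitian A"
    and col0: "\<And>i. i < Suc m \<Longrightarrow> A $$ (i, 0) = (if i = 0 then e else 0)"
  defines "A1 \<equiv> mat m m (\<lambda>(i, j). A $$ (Suc i, Suc j))"
  shows "hermitian A1" "A = four_block_mat (mat 1 1 (\<lambda>_. e)) (0\<^sub>m 1 m) (0\<^sub>m m 1) A1"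
proof -
  show "hermitian A1" unfolding hermitian_def
  proof (intro conjI allI impI)
    fix i j assume "i < dim_row A1" "j < dim_row A1"
    then show "A1 $$ (i, j) = cnj (A1 $$ (j, i))"
      using hermitianD[OF A(2), of "Suc i" "Suc j"] A(1) by (simp add: A1_def)
  qed (simp add: A1_def)
  have row0: "A $$ (0, Suc j) = 0" if "j < m" for j
    using hermitianD[OF A(2), of 0 "Suc j"] col0[of "Suc j"] A(1) that by simp
  show "A = four_block_mat (mat 1 1 (\<lambda>_. e)) (0\<^sub>m 1 m) (0\<^sub>m m 1) A1"
  proof (rule eq_matI)
    fix i j assume "i < dim_row (four_block_mat (mat 1 1 (\<lambda>_. e)) (0\<^sub>m 1 m) (0\<^sub>m m 1) A1)"
      "j < dim_col (four_block_mat (mat 1 1 (\<lambda>_. e)) (0\<^sub>m 1 m) (0\<^sub>m m 1) A1)"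
    then have ij: "i < Suc m" "j < Suc m" by (simp_all add: A1_def)
    show "A $$ (i, j) = four_block_mat (mat 1 1 (\<lambda>_. e)) (0\<^sub>m 1 m) (0\<^sub>m m 1) A1 $$ (i, j)"
    proof (cases i)
      case 0
      then show ?thesis using col0[of 0] row0[of "j - 1"] ij by (cases j) (simp_all add: A1_def)
    next
      case (Suc i')
      then show ?thesis using col0[of i] ij by (cases j) (simp_all add: A1_def)
    qed
  qed (use A(1) in \<open>simp_all add: A1_def\<close>)
qed

lemma hermitian_deflation:
  fixes A :: "complex mat"
  assumes A: "A \<in> carrier_mat (Suc m) (Suc m)" "hermitian A"
  obtains W e A1 where "unitary (Suc m) W" "A1 \<in> carrier_mat m m" "hermitian A1"
    "mat_adjoint W * A * W = four_block_mat (mat 1 1 (\<lambda>_. e)) (0\<^sub>m 1 m) (0\<^sub>m m 1) A1"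
proof -
  obtain e v where v: "v \<in> carrier_vec (Suc m)" "v \<bullet>c v = 1" "A *\<^sub>v v = e \<cdot>\<^sub>v v"
    using unit_eigenvector_exists[OF A(1)] by blast
  obtain W where W: "unitary (Suc m) W" "col W 0 = v"
    using unitary_with_first_col[OF v(1,2)] .
  let ?A' = "mat_adjoint W * A * W"
  have A': "?A' \<in> carrier_mat (Suc m) (Suc m)" "hermitian ?A'"
    using A unitaryD(1)[OF W(1)] hermitian_mat_adjoint_conj[OF A] by auto
  have "?A' $$ (i, 0) = (if i = 0 then e else 0)" if "i < Suc m" for i
    using mat_adjoint_conj_first_col[OF A(1) W(1)] v(3) W(2) that by simp
  from hermitian_first_col_block[OF A' this] show ?thesis
    by (intro that[OF W(1)]) auto
qed

lemma mat_adjoint_four_block_one: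
  fixes U :: "complex mat"
  assumes "U \<in> carrier_mat m m"
  shows "mat_adjoint (four_block_mat (1\<^sub>m 1) (0\<^sub>m 1 m) (0\<^sub>m m 1) U) =
    four_block_mat (1\<^sub>m 1) (0\<^sub>m 1 m) (0\<^sub>m m 1) (mat_adjoint U)"
proof (rule eq_matI)
  fix i j assume "i < dim_row (four_block_mat (1\<^sub>m 1) (0\<^sub>m 1 m) (0\<^sub>m m 1) (mat_adjoint U))"
    "j < dim_col (four_block_mat (1\<^sub>m 1) (0\<^sub>m 1 m) (0\<^sub>m m 1) (mat_adjoint U))"
  with assms have "i < Suc m" "j < Suc m" by auto
  with assms show "mat_adjoint (four_block_mat (1\<^sub>m 1) (0\<^sub>m 1 m) (0\<^sub>m m 1) U) $$ (i, j) =
      four_block_mat (1\<^sub>m 1) (0\<^sub>m 1 m) (0\<^sub>m m 1) (mat_adjoint U) $$ (i, j)"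
    by (subst mat_adjoint_index) auto
qed (use assms in auto)

lemma unitary_four_block_one:
  assumes U: "unitary m U"
  shows "unitary (Suc m) (four_block_mat (1\<^sub>m 1) (0\<^sub>m 1 m) (0\<^sub>m m 1) U)"
proof -
  note Uu = unitaryD[OF U]
  have "mat_adjoint (four_block_mat (1\<^sub>m 1) (0\<^sub>m 1 m) (0\<^sub>m m 1) U) *
      four_block_mat (1\<^sub>m 1) (0\<^sub>m 1 m) (0\<^sub>m m 1) U = 1\<^sub>m (1 + m)"
    unfolding mat_adjoint_four_block_one[OF Uu(1)]
    using Uu by (simp add: mult_four_block_mat[OF one_carrier_mat zero_carrier_mat zero_carrier_mat
      mat_adjoint_carrier[OF Uu(1)] one_carrier_mat zero_carrier_mat zero_carrier_mat Uu(1)])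
  moreover have "four_block_mat (1\<^sub>m 1) (0\<^sub>m 1 m) (0\<^sub>m m 1) U \<in> carrier_mat (1 + m) (1 + m)"
    using four_block_carrier_mat[OF one_carrier_mat Uu(1)] .
  ultimately show ?thesis by (simp add: unitary_def)
qed

theorem hermitian_unitary_diagonalization:
  fixes A :: "complex mat"
  assumes "A \<in> carrier_mat n n" "hermitian A"
  shows "\<exists>U B. unitary n U \<and> diagonal_mat B \<and> similar_mat_wit A B U (mat_adjoint U)"
  using assms
proof (induction n arbitrary: A)
  case 0
  then have "similar_mat_wit A A (1\<^sub>m 0) (mat_adjoint (1\<^sub>m 0))"
    using similar_mat_wit_refl[of A 0] by simp
  moreover have "unitary 0 (1\<^sub>m 0)" "diagonal_mat A"
    using 0 by (auto simp: unitary_def diagonal_mat_def)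
  ultimately show ?case by blast
next
  case (Suc m)
  obtain W e A1 where W: "unitary (Suc m) W" and A1: "A1 \<in> carrier_mat m m" "hermitian A1"
    and block: "mat_adjoint W * A * W = four_block_mat (mat 1 1 (\<lambda>_. e)) (0\<^sub>m 1 m) (0\<^sub>m m 1) A1"
    using hermitian_deflation[OF Suc.prems] .
  obtain U1 B1 where U1: "unitary m U1" and B1: "diagonal_mat B1"
    and sim1: "similar_mat_wit A1 B1 U1 (mat_adjoint U1)"
    using Suc.IH[OF A1] by blast
  have B1_carrier: "B1 \<in> carrier_mat m m" using similar_mat_witD2[OF A1(1) sim1] by simp
  define E where "E = mat 1 1 (\<lambda>_. e)"
  define P where "P = four_block_mat (1\<^sub>m 1) (0\<^sub>m 1 m) (0\<^sub>m m 1) U1"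
  define B where "B = four_block_mat E (0\<^sub>m 1 m) (0\<^sub>m m 1) B1"
  have P: "unitary (Suc m) P" unfolding P_def by (rule unitary_four_block_one[OF U1])
  have "similar_mat_wit (mat_adjoint W * A * W) B P (mat_adjoint P)"
    unfolding block E_def[symmetric] B_def P_def mat_adjoint_four_block_one[OF unitaryD(1)[OF U1]]
    using unitaryD(1)[OF U1] A1(1)
    by (intro similar_mat_wit_four_block[OF similar_mat_wit_refl sim1]) (auto simp: E_def)
  moreover have "similar_mat_wit A (mat_adjoint W * A * W) W (mat_adjoint W)"
    by (rule unitary_similar_mat_wit[OF W Suc.prems(1)])
  ultimately have "similar_mat_wit A B (W * P) (mat_adjoint (W * P))"
    using similar_mat_wit_trans mat_adjoint_mult[OF unitaryD(1)[OF W] unitaryD(1)[OF P]] by metis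
  moreover have "diagonal_mat B"
    using B1 B1_carrier unfolding B_def E_def diagonal_mat_def by auto
  ultimately show ?case using unitary_mult[OF W P] by blast
qed

lemma proots_prod_linear_factors: "proots (\<Prod>a\<leftarrow>xs. [:- a, 1:]) = mset (xs :: complex list)"
proof (induction xs)
  case (Cons a xs)
  have "(\<Prod>a\<leftarrow>xs. [:- a, 1:]) \<noteq> 0" by (auto simp: prod_list_zero_iff)
  then show ?case using Cons proots_mult[of "[:- a, 1:]" "\<Prod>a\<leftarrow>xs. [:- a, 1:]"] by simp
qed simp

lemma eigvals_similar_diagonal:
  assumes A: "A \<in> carrier_mat n n" and sim: "similar_mat_wit A B P Q" and B: "diagonal_mat B"
  shows "eigvals A = mset (diag_mat B)"
proof -
  have B_carrier: "B \<in> carrier_mat n n" using similar_mat_witD2[OF A sim] by simp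
  have "char_poly A = char_poly B"
    using sim by (intro char_poly_similar) (auto simp: similar_mat_def)
  also have "\<dots> = (\<Prod>a\<leftarrow>diag_mat B. [:- a, 1:])"
    using B B_carrier by (intro char_poly_upper_triangular) (auto simp: diagonal_mat_def upper_triangular_def)
  finally show ?thesis
    unfolding eigvals_def by (simp only: proots_prod_linear_factors)
qed

lemma hermitian_diag_real:
  "hermitian A \<Longrightarrow> i < dim_row A \<Longrightarrow> A $$ (i, i) = complex_of_real (Re (A $$ (i, i)))"
  using hermitianD[of A i i] by (simp add: complex_eq_iff)

lemma hermitian_spectral_decomposition:
  assumes M: "M \<in> carrier_mat n n" "hermitian M"
  obtains P B ev where "unitary n P" "B \<in> carrier_mat n n" "diagonal_mat B"
    "M = P * B * mat_adjoint P" "B = mat_adjoint P * M * P"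
    "\<And>k. k < n \<Longrightarrow> B $$ (k, k) = complex_of_real (ev k)"
    "eigvals M = mset (map (\<lambda>k. complex_of_real (ev k)) [0..<n])"
proof -
  obtain P B where P: "unitary n P" and B: "diagonal_mat B"
    and sim: "similar_mat_wit M B P (mat_adjoint P)"
    using hermitian_unitary_diagonalization[OF M] by blast
  note simD = similar_mat_witD2[OF M(1) sim]
  have B_eq: "B = mat_adjoint P * M * P"
    using similar_mat_witD2(3)[OF simD(5) similar_mat_wit_sym[OF sim]] by simp
  define ev where "ev k = Re (B $$ (k, k))" for k
  have "hermitian B"
    unfolding B_eq using hermitian_mat_adjoint_conj[OF M simD(6)] .
  then have diag: "B $$ (k, k) = complex_of_real (ev k)" if "k < n" for k
    using hermitian_diag_real[of B k] simD(5) that by (simp add: ev_def)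
  have "diag_mat B = map (\<lambda>k. complex_of_real (ev k)) [0..<n]"
    unfolding diag_mat_def using simD(5) diag by simp
  then have "eigvals M = mset (map (\<lambda>k. complex_of_real (ev k)) [0..<n])"
    using eigvals_similar_diagonal[OF M(1) sim B] by simp
  from that[OF P simD(5) B simD(3) B_eq diag this] show ?thesis .
qed

section \<open>Diagonal entries in an orthonormal basis\<close>

definition quad_form :: "complex mat \<Rightarrow> complex vec \<Rightarrow> complex" where
  "quad_form M v = (\<Sum>i<dim_row M. \<Sum>j<dim_row M. cnj (v $ i) * M $$ (i, j) * v $ j)"

lemma psd_quad_form_nonneg: "psd M \<Longrightarrow> dim_vec v = dim_row M \<Longrightarrow> 0 \<le> Re (quad_form M v)"
  unfolding psd_def quad_form_def by blast

lemma quad_form_diff: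
  "M \<in> carrier_mat n n \<Longrightarrow> N \<in> carrier_mat n n \<Longrightarrow> quad_form (M - N) v = quad_form M v - quad_form N v"
  unfolding quad_form_def by (simp add: sum_subtractf algebra_simps)

lemma quad_form_smult: "M \<in> carrier_mat n n \<Longrightarrow> quad_form (c \<cdot>\<^sub>m M) v = c * quad_form M v"
  unfolding quad_form_def by (simp add: sum_distrib_left mult_ac)

lemma quad_form_col:
  assumes M: "M \<in> carrier_mat n n" and U: "U \<in> carrier_mat n m" and k: "k < m"
  shows "quad_form M (col U k) = (mat_adjoint U * M * U) $$ (k, k)"
proof -
  have "(mat_adjoint U * M * U) $$ (k, k) = (\<Sum>l<n. (\<Sum>i<n. cnj (U $$ (i, k)) * M $$ (i, l)) * U $$ (l, k))"
    using M U k by (simp add: scalar_prod_def atLeast0LessThan)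
  also have "\<dots> = (\<Sum>i<n. \<Sum>l<n. cnj (U $$ (i, k)) * M $$ (i, l) * U $$ (l, k))"
    unfolding sum_distrib_right by (rule sum.swap)
  also have "\<dots> = quad_form M (col U k)"
    unfolding quad_form_def using M U k by simp
  finally show ?thesis by simp
qed

lemma quad_form_diagonal:
  assumes B: "B \<in> carrier_mat n n" "diagonal_mat B"
  shows "quad_form B v = (\<Sum>i<n. complex_of_real ((cmod (v $ i))\<^sup>2) * B $$ (i, i))"
proof -
  have "(\<Sum>j<n. cnj (v $ i) * B $$ (i, j) * v $ j) = cnj (v $ i) * B $$ (i, i) * v $ i"
    if "i < n" for i
  proof -
    have "(\<Sum>j<n. cnj (v $ i) * B $$ (i, j) * v $ j) =
        (\<Sum>j<n. if j = i then cnj (v $ i) * B $$ (i, i) * v $ i else 0)"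
      using B that by (intro sum.cong) (auto simp: diagonal_mat_def)
    then show ?thesis using that by simp
  qed
  then have "quad_form B v = (\<Sum>i<n. cnj (v $ i) * B $$ (i, i) * v $ i)"
    unfolding quad_form_def using B(1) by simp
  also have "\<dots> = (\<Sum>i<n. complex_of_real ((cmod (v $ i))\<^sup>2) * B $$ (i, i))"
    by (simp only: complex_norm_square) (simp add: mult_ac)
  finally show ?thesis .
qed

definition doubly_stochastic :: "nat \<Rightarrow> (nat \<Rightarrow> nat \<Rightarrow> real) \<Rightarrow> bool" where
  "doubly_stochastic n s \<longleftrightarrow> (\<forall>j<n. \<forall>k<n. 0 \<le> s j k) \<and>
     (\<forall>k<n. (\<Sum>j<n. s j k) = 1) \<and> (\<forall>j<n. (\<Sum>k<n. s j k) = 1)"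

lemma unitary_doubly_stochastic:
  assumes S: "unitary n S"
  shows "doubly_stochastic n (\<lambda>j k. (cmod (S $$ (j, k)))\<^sup>2)"
proof -
  note Su = unitaryD[OF S]
  have "complex_of_real (\<Sum>j<n. (cmod (S $$ (j, k)))\<^sup>2) = (mat_adjoint S * S) $$ (k, k)"
    if "k < n" for k
    unfolding of_real_sum complex_norm_square
    using Su(1) that by (simp add: scalar_prod_def atLeast0LessThan mult.commute)
  moreover have "complex_of_real (\<Sum>k<n. (cmod (S $$ (j, k)))\<^sup>2) = (S * mat_adjoint S) $$ (j, j)"
    if "j < n" for j
    unfolding of_real_sum complex_norm_square
    using Su(1) that by (simp add: scalar_prod_def atLeast0LessThan)
  ultimately show ?thesis
    using Su(2,3) unfolding doubly_stochastic_def by (metis index_one_mat(1) of_real_eq_1_iff zero_le_power2)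
qed

lemma hermitian_conj_diag_mixes_eigenvalues:
  assumes M: "M \<in> carrier_mat n n" "hermitian M" and U: "unitary n U"
  obtains ev s where "eigvals M = mset (map (\<lambda>j. complex_of_real (ev j)) [0..<n])"
    "doubly_stochastic n s"
    "\<And>k. k < n \<Longrightarrow> quad_form M (col U k) = complex_of_real (\<Sum>j<n. s j k * ev j)"
proof -
  obtain P B ev where P: "unitary n P" and B: "B \<in> carrier_mat n n" "diagonal_mat B"
    and M_eq: "M = P * B * mat_adjoint P" and "B = mat_adjoint P * M * P"
    and diag: "\<And>k. k < n \<Longrightarrow> B $$ (k, k) = complex_of_real (ev k)"
    and ev: "eigvals M = mset (map (\<lambda>k. complex_of_real (ev k)) [0..<n])"
    by (rule hermitian_spectral_decomposition[OF M]) blast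
  define S where "S = mat_adjoint P * U"
  have S: "unitary n S" unfolding S_def by (intro unitary_mult unitary_mat_adjoint P U)
  note Pu = unitaryD[OF P] and Uu = unitaryD[OF U]
  have "mat_adjoint S = mat_adjoint U * P"
    unfolding S_def using Pu Uu by (simp add: mat_adjoint_mult[of _ n n])
  then have conj: "mat_adjoint U * M * U = mat_adjoint S * B * S"
    unfolding M_eq S_def using Pu(1) Uu(1) B(1) mult_carrier_mat[OF Pu(1) B(1)]
      mult_carrier_mat[OF mat_adjoint_carrier[OF Pu(1)] Uu(1)]
    by (simp add: assoc_mult_mat[of _ n n _ n _ n])
  have "quad_form M (col U k) = complex_of_real (\<Sum>j<n. (cmod (S $$ (j, k)))\<^sup>2 * ev j)"
    if "k < n" for k
  proof -
    have "quad_form M (col U k) = quad_form B (col S k)"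
      using quad_form_col[OF M(1) Uu(1) that] quad_form_col[OF B(1) unitaryD(1)[OF S] that] conj
      by simp
    also have "\<dots> = (\<Sum>j<n. complex_of_real ((cmod (S $$ (j, k)))\<^sup>2) * complex_of_real (ev j))"
      using quad_form_diagonal[OF B] diag unitaryD(1)[OF S] that by simp
    finally show ?thesis by simp
  qed
  from that[OF ev unitary_doubly_stochastic[OF S] this] show ?thesis .
qed

lemma convex_on_powr_nonneg:
  assumes p: "1 \<le> p"
  shows "convex_on {0..} (\<lambda>x::real. x powr p)"
proof (rule convex_onI)
  have scale: "(t * y) powr p \<le> t * y powr p" if "0 < t" "t \<le> 1" "0 \<le> y" for t y :: real
    using powr_le_one_le[OF that(1,2) p] that by (simp add: powr_mult mult_right_mono)
  fix t x y :: real assume t: "0 < t" "t < 1" and xy: "x \<in> {0..}" "y \<in> {0..}"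
  show "((1 - t) *\<^sub>R x + t *\<^sub>R y) powr p \<le> (1 - t) * x powr p + t * y powr p"
  proof (cases "x = 0 \<or> y = 0")
    case True
    then show ?thesis using scale[of t y] scale[of "1 - t" x] t xy p by auto
  next
    case False
    then have "x \<in> {0<..}" "y \<in> {0<..}" using xy by auto
    from convex_onD[OF powr_convex[OF p], of t x y, OF _ _ this] t show ?thesis by simp
  qed
qed (simp add: convex_real_interval)

lemma doubly_stochastic_sum_powr_le:
  fixes x :: "nat \<Rightarrow> real"
  assumes s: "doubly_stochastic n s" and p: "1 \<le> p"
  shows "(\<Sum>k<n. \<bar>\<Sum>j<n. s j k * x j\<bar> powr p) \<le> (\<Sum>j<n. \<bar>x j\<bar> powr p)"
proof -
  have s_nonneg: "0 \<le> s j k" if "j < n" "k < n" for j k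
    using s that by (simp add: doubly_stochastic_def)
  have "\<bar>\<Sum>j<n. s j k * x j\<bar> powr p \<le> (\<Sum>j<n. s j k * \<bar>x j\<bar> powr p)" if k: "k < n" for k
  proof -
    have "\<bar>\<Sum>j<n. s j k * x j\<bar> \<le> (\<Sum>j<n. s j k * \<bar>x j\<bar>)"
      using sum_abs[of "\<lambda>j. s j k * x j" "{..<n}"] s_nonneg k by (simp add: abs_mult)
    then have "\<bar>\<Sum>j<n. s j k * x j\<bar> powr p \<le> (\<Sum>j<n. s j k * \<bar>x j\<bar>) powr p"
      using p by (intro powr_mono2) auto
    also have "\<dots> \<le> (\<Sum>j<n. s j k * \<bar>x j\<bar> powr p)"
      using convex_on_sum[OF _ _ convex_on_powr_nonneg[OF p], of "{..<n}" "\<lambda>j. s j k" "\<lambda>j. \<bar>x j\<bar>"]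
        s k s_nonneg by (auto simp: doubly_stochastic_def)
    finally show ?thesis .
  qed
  then have "(\<Sum>k<n. \<bar>\<Sum>j<n. s j k * x j\<bar> powr p) \<le> (\<Sum>k<n. \<Sum>j<n. s j k * \<bar>x j\<bar> powr p)"
    by (intro sum_mono) simp
  also have "\<dots> = (\<Sum>j<n. (\<Sum>k<n. s j k) * \<bar>x j\<bar> powr p)"
    by (subst sum.swap) (simp add: sum_distrib_right)
  also have "\<dots> = (\<Sum>j<n. \<bar>x j\<bar> powr p)"
    using s by (simp add: doubly_stochastic_def)
  finally show ?thesis .
qed

lemma doubly_stochastic_abs_le:
  fixes x :: "nat \<Rightarrow> real"
  assumes s: "doubly_stochastic n s" and k: "k < n" and x: "\<And>j. j < n \<Longrightarrow> \<bar>x j\<bar> \<le> b"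
  shows "\<bar>\<Sum>j<n. s j k * x j\<bar> \<le> b"
proof -
  have s_nonneg: "0 \<le> s j k" if "j < n" for j
    using s k that by (simp add: doubly_stochastic_def)
  have "\<bar>\<Sum>j<n. s j k * x j\<bar> \<le> (\<Sum>j<n. \<bar>s j k * x j\<bar>)"
    by (rule sum_abs)
  also have "\<dots> \<le> (\<Sum>j<n. s j k * b)"
    using s_nonneg x by (intro sum_mono) (simp add: abs_mult mult_left_mono)
  also have "\<dots> = b" using s k by (simp add: doubly_stochastic_def flip: sum_distrib_right)
  finally show ?thesis .
qed

section \<open>Schatten norms\<close>

lemma schatten_norm_finite_eq:
  assumes "eigvals M = mset (map (\<lambda>k. complex_of_real (f k)) [0..<n])" "p \<noteq> \<infinity>"
  shows "schatten_norm p M = (\<Sum>k<n. \<bar>f k\<bar> powr real_of_ereal p) powr (1 / real_of_ereal p)"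
  using assms unfolding schatten_norm_def
  by (simp add: sum_unfold_sum_mset image_mset.compositionality o_def atLeast0LessThan)

lemma schatten_norm_infinity_eq:
  assumes "eigvals M = mset (map (\<lambda>k. complex_of_real (f k)) [0..<n])"
  shows "schatten_norm \<infinity> M = Max (insert 0 ((\<lambda>k. \<bar>f k\<bar>) ` {..<n}))"
proof -
  have "cmod ` set_mset (eigvals M) = (\<lambda>k. \<bar>f k\<bar>) ` {..<n}"
    unfolding assms by (auto simp: atLeast0LessThan image_image)
  then show ?thesis unfolding schatten_norm_def by simp
qed

lemma schatten_norm_nonneg: "0 \<le> schatten_norm p M"
  unfolding schatten_norm_def by (simp add: Max_ge_iff)

lemma hermitian_eigenbasis:
  assumes M: "M \<in> carrier_mat n n" "hermitian M"
  obtains U ev where "unitary n U" "eigvals M = mset (map (\<lambda>k. complex_of_real (ev k)) [0..<n])"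
    "\<And>k. k < n \<Longrightarrow> quad_form M (col U k) = complex_of_real (ev k)"
proof -
  obtain P B ev where P: "unitary n P" and "B \<in> carrier_mat n n" "diagonal_mat B"
    "M = P * B * mat_adjoint P" and B_eq: "B = mat_adjoint P * M * P"
    and diag: "\<And>k. k < n \<Longrightarrow> B $$ (k, k) = complex_of_real (ev k)"
    and ev: "eigvals M = mset (map (\<lambda>k. complex_of_real (ev k)) [0..<n])"
    by (rule hermitian_spectral_decomposition[OF M]) blast
  have "quad_form M (col P k) = complex_of_real (ev k)" if "k < n" for k
    using quad_form_col[OF M(1) unitaryD(1)[OF P] that] diag[OF that] B_eq by simp
  from that[OF P ev this] show ?thesis .
qed

lemma sum_powr_quad_form_le_schatten_norm:
  assumes M: "M \<in> carrier_mat n n" "hermitian M" and U: "unitary n U" and q: "1 \<le> q"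
  shows "(\<Sum>k<n. \<bar>Re (quad_form M (col U k))\<bar> powr q) \<le> schatten_norm (ereal q) M powr q"
proof -
  obtain ev s where ev: "eigvals M = mset (map (\<lambda>j. complex_of_real (ev j)) [0..<n])"
    and s: "doubly_stochastic n s"
    and diag: "\<And>k. k < n \<Longrightarrow> quad_form M (col U k) = complex_of_real (\<Sum>j<n. s j k * ev j)"
    by (rule hermitian_conj_diag_mixes_eigenvalues[OF M U]) blast
  have "(\<Sum>k<n. \<bar>Re (quad_form M (col U k))\<bar> powr q) = (\<Sum>k<n. \<bar>\<Sum>j<n. s j k * ev j\<bar> powr q)"
    using diag by simp
  also have "\<dots> \<le> (\<Sum>j<n. \<bar>ev j\<bar> powr q)"
    by (rule doubly_stochastic_sum_powr_le[OF s q])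
  also have "\<dots> = schatten_norm (ereal q) M powr q"
    using schatten_norm_finite_eq[OF ev] q by (simp add: powr_powr sum_nonneg)
  finally show ?thesis .
qed

lemma abs_quad_form_le_schatten_norm_infinity:
  assumes M: "M \<in> carrier_mat n n" "hermitian M" and U: "unitary n U" and k: "k < n"
  shows "\<bar>Re (quad_form M (col U k))\<bar> \<le> schatten_norm \<infinity> M"
proof -
  obtain ev s where ev: "eigvals M = mset (map (\<lambda>j. complex_of_real (ev j)) [0..<n])"
    and s: "doubly_stochastic n s"
    and diag: "\<And>k. k < n \<Longrightarrow> quad_form M (col U k) = complex_of_real (\<Sum>j<n. s j k * ev j)"
    by (rule hermitian_conj_diag_mixes_eigenvalues[OF M U]) blast
  have "\<bar>ev j\<bar> \<le> schatten_norm \<infinity> M" if "j < n" for j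
    unfolding schatten_norm_infinity_eq[OF ev] using that by (intro Max_ge) auto
  with doubly_stochastic_abs_le[OF s k] diag[OF k] show ?thesis by simp
qed

section \<open>The Thompson metric bound\<close>

lemma loewner_le_quad_form:
  assumes "loewner_le X (complex_of_real a \<cdot>\<^sub>m Y)" "X \<in> carrier_mat n n" "Y \<in> carrier_mat n n"
    "v \<in> carrier_vec n"
  shows "Re (quad_form X v) \<le> a * Re (quad_form Y v)"
proof -
  have "0 \<le> Re (quad_form (complex_of_real a \<cdot>\<^sub>m Y - X) v)"
    using assms by (intro psd_quad_form_nonneg) (auto simp: loewner_le_def)
  also have "quad_form (complex_of_real a \<cdot>\<^sub>m Y - X) v = complex_of_real a * quad_form Y v - quad_form X v"
    using assms quad_form_diff[of "complex_of_real a \<cdot>\<^sub>m Y" n X] quad_form_smult[of Y n] by simp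
  finally show ?thesis by simp
qed

lemma abs_diff_le_of_mutual_bounds:
  fixes x y a :: real
  assumes "1 \<le> a" "x \<le> a * y" "y \<le> a * x"
  shows "\<bar>x - y\<bar> \<le> (1 - 1 / a) * max \<bar>x\<bar> \<bar>y\<bar>"
proof -
  have "x / a \<le> y" "y / a \<le> x" using assms by (simp_all add: divide_le_eq mult.commute)
  then have "\<bar>x - y\<bar> \<le> (1 - 1 / a) * x \<or> \<bar>x - y\<bar> \<le> (1 - 1 / a) * y"
    by (auto simp: algebra_simps)
  moreover have "0 \<le> 1 - 1 / a" using assms by simp
  ultimately show ?thesis
    by (smt (verit) abs_ge_self max.cobounded1 max.cobounded2 mult_left_mono)
qed

lemma sum_powr_root_le_of_pointwise_max:
  fixes e x y :: "nat \<Rightarrow> real"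
  assumes q: "1 \<le> q" and c: "0 \<le> c"
    and pointwise: "\<And>k. k < n \<Longrightarrow> \<bar>e k\<bar> \<le> c * max \<bar>x k\<bar> \<bar>y k\<bar>"
    and A: "0 \<le> A" "(\<Sum>k<n. \<bar>x k\<bar> powr q) \<le> A powr q"
    and B: "0 \<le> B" "(\<Sum>k<n. \<bar>y k\<bar> powr q) \<le> B powr q"
  shows "(\<Sum>k<n. \<bar>e k\<bar> powr q) powr (1 / q) \<le> 2 powr (1 / q) * c * max A B"
proof -
  have max_powr: "max a b powr q \<le> a powr q + b powr q" if "0 \<le> a" "0 \<le> b" for a b :: real
    by (cases "a \<le> b") (simp_all add: max_def)
  have "\<bar>e k\<bar> powr q \<le> c powr q * (\<bar>x k\<bar> powr q + \<bar>y k\<bar> powr q)" if "k < n" for k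
  proof -
    have "\<bar>e k\<bar> powr q \<le> (c * max \<bar>x k\<bar> \<bar>y k\<bar>) powr q"
      using pointwise[OF that] q by (intro powr_mono2) auto
    also have "\<dots> \<le> c powr q * (\<bar>x k\<bar> powr q + \<bar>y k\<bar> powr q)"
      using c max_powr[of "\<bar>x k\<bar>" "\<bar>y k\<bar>"] by (simp add: powr_mult mult_left_mono)
    finally show ?thesis .
  qed
  then have "(\<Sum>k<n. \<bar>e k\<bar> powr q) \<le> (\<Sum>k<n. c powr q * (\<bar>x k\<bar> powr q + \<bar>y k\<bar> powr q))"
    by (rule sum_mono) simp
  also have "\<dots> = c powr q * ((\<Sum>k<n. \<bar>x k\<bar> powr q) + (\<Sum>k<n. \<bar>y k\<bar> powr q))"
    by (simp add: distrib_left sum.distrib sum_distrib_left)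
  also have "\<dots> \<le> c powr q * (2 * max A B powr q)"
  proof -
    have "A powr q \<le> max A B powr q" "B powr q \<le> max A B powr q"
      using A B q by (simp_all add: powr_mono2)
    with A(2) B(2) show ?thesis by (intro mult_left_mono) simp_all
  qed
  also have "\<dots> = (2 powr (1 / q) * c * max A B) powr q"
    using q c A(1) by (simp add: powr_mult powr_powr)
  finally have "(\<Sum>k<n. \<bar>e k\<bar> powr q) powr (1 / q) \<le> ((2 powr (1 / q) * c * max A B) powr q) powr (1 / q)"
    using q by (intro powr_mono2) (auto intro: sum_nonneg)
  also have "\<dots> = 2 powr (1 / q) * c * max A B"
    using q c A(1) by (simp add: powr_powr)
  finally show ?thesis .
qed

lemma Max_abs_le_of_pointwise_max:
  fixes e x y :: "nat \<Rightarrow> real"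
  assumes c: "0 \<le> c"
    and pointwise: "\<And>k. k < n \<Longrightarrow> \<bar>e k\<bar> \<le> c * max \<bar>x k\<bar> \<bar>y k\<bar>"
    and A: "0 \<le> A" "\<And>k. k < n \<Longrightarrow> \<bar>x k\<bar> \<le> A"
    and B: "\<And>k. k < n \<Longrightarrow> \<bar>y k\<bar> \<le> B"
  shows "Max (insert 0 ((\<lambda>k. \<bar>e k\<bar>) ` {..<n})) \<le> c * max A B"
proof (rule Max.boundedI)
  fix z assume "z \<in> insert 0 ((\<lambda>k. \<bar>e k\<bar>) ` {..<n})"
  then consider "z = 0" | k where "k < n" "z = \<bar>e k\<bar>" by blast
  then show "z \<le> c * max A B"
  proof cases
    case 1
    then show ?thesis using c A(1) by (simp add: le_max_iff_disj)
  next
    case 2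
    then have "max \<bar>x k\<bar> \<bar>y k\<bar> \<le> max A B" using A(2)[of k] B[of k] by (auto intro: max.mono)
    with 2 show ?thesis using pointwise[of k] c by (smt (verit) mult_left_mono)
  qed
qed simp_all

lemma schatten_norm_diff_le_of_loewner:
  fixes X Y :: "complex mat" and p :: ereal and a :: real
  assumes X: "X \<in> carrier_mat n n" "hermitian X" and Y: "Y \<in> carrier_mat n n" "hermitian Y"
    and a: "1 \<le> a" and XY: "loewner_le X (complex_of_real a \<cdot>\<^sub>m Y)"
    and YX: "loewner_le Y (complex_of_real a \<cdot>\<^sub>m X)" and p: "1 \<le> p"
  shows "schatten_norm p (X - Y) \<le>
    two_pow_inv p * (1 - 1 / a) * max (schatten_norm p X) (schatten_norm p Y)"
proof -
  obtain U ev where U: "unitary n U"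
    and ev: "eigvals (X - Y) = mset (map (\<lambda>k. complex_of_real (ev k)) [0..<n])"
    and diag: "\<And>k. k < n \<Longrightarrow> quad_form (X - Y) (col U k) = complex_of_real (ev k)"
    by (rule hermitian_eigenbasis[OF _ hermitian_diff[OF X(1) Y(1) X(2) Y(2)]]) (use X Y in auto)
  define x where "x k = Re (quad_form X (col U k))" for k
  define y where "y k = Re (quad_form Y (col U k))" for k
  define c where "c = 1 - 1 / a"
  have c: "0 \<le> c" using a by (simp add: c_def)
  have gap: "\<bar>ev k\<bar> \<le> c * max \<bar>x k\<bar> \<bar>y k\<bar>" if k: "k < n" for k
  proof -
    have col: "col U k \<in> carrier_vec n" using unitaryD(1)[OF U] k by simp
    have "ev k = x k - y k"
      using diag[OF k] quad_form_diff[OF X(1) Y(1), of "col U k"] by (simp add: x_def y_def complex_eq_iff)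
    moreover have "x k \<le> a * y k" "y k \<le> a * x k"
      unfolding x_def y_def using loewner_le_quad_form[OF XY X(1) Y(1) col]
        loewner_le_quad_form[OF YX Y(1) X(1) col] by simp_all
    ultimately show ?thesis using abs_diff_le_of_mutual_bounds[OF a] by (simp add: c_def)
  qed
  show ?thesis
  proof (cases "p = \<infinity>")
    case True
    have "schatten_norm p (X - Y) \<le> c * max (schatten_norm p X) (schatten_norm p Y)"
      unfolding True schatten_norm_infinity_eq[OF ev] x_def y_def
      by (rule Max_abs_le_of_pointwise_max[OF c gap[unfolded x_def y_def]])
        (use abs_quad_form_le_schatten_norm_infinity X Y U schatten_norm_nonneg in auto)
    then show ?thesis using True by (simp add: two_pow_inv_def c_def)
  next
    case False
    then obtain q where pq: "p = ereal q" and q: "1 \<le> q" using p by (cases p) auto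
    have "schatten_norm p (X - Y) = (\<Sum>k<n. \<bar>ev k\<bar> powr q) powr (1 / q)"
      using schatten_norm_finite_eq[OF ev False] pq by simp
    also have "\<dots> \<le> 2 powr (1 / q) * c * max (schatten_norm p X) (schatten_norm p Y)"
      unfolding pq x_def y_def
      by (rule sum_powr_root_le_of_pointwise_max[OF q c gap[unfolded x_def y_def]])
        (use sum_powr_quad_form_le_schatten_norm X Y U q schatten_norm_nonneg in auto)
    finally show ?thesis using pq by (simp add: two_pow_inv_def c_def)
  qed
qed

lemma le_one_minus_exp_neg_Inf_ln:
  fixes S :: "real set" and L G d :: real
  assumes Inf: "Inf ((\<lambda>\<alpha>. ereal (ln \<alpha>)) ` S) = ereal d"
    and pos: "\<And>\<alpha>. \<alpha> \<in> S \<Longrightarrow> 0 < \<alpha>"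
    and bound: "\<And>\<alpha>. \<alpha> \<in> S \<Longrightarrow> L \<le> G * (1 - 1 / \<alpha>)"
    and G: "0 \<le> G"
  shows "L \<le> G * (1 - exp (- d))"
proof -
  have "S \<noteq> {}"
  proof
    assume "S = {}"
    with Inf show False by (simp add: top_ereal_def)
  qed
  then obtain \<alpha>0 where \<alpha>0: "\<alpha>0 \<in> S" by blast
  show ?thesis
  proof (cases "G = 0")
    case True
    then show ?thesis using bound[OF \<alpha>0] by simp
  next
    case False
    \<comment> \<open>The infimum need not be attained; instead every \<open>\<alpha> \<in> S\<close> is at least \<open>G / (G - L)\<close>.\<close>
    define r where "r = G - L"
    have ratio: "G / \<alpha> \<le> r" if "\<alpha> \<in> S" for \<alpha>
      using bound[OF that] pos[OF that] by (simp add: r_def field_simps)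
    moreover have "0 < G / \<alpha>0" using G False pos[OF \<alpha>0] by simp
    ultimately have r: "0 < r" using \<alpha>0 by fastforce
    have "ereal (ln (G / r)) \<le> ereal (ln \<alpha>)" if "\<alpha> \<in> S" for \<alpha>
      using ratio[OF that] G False r pos[OF that] by (simp add: field_simps)
    then have "ereal (ln (G / r)) \<le> ereal d"
      unfolding Inf[symmetric] by (intro Inf_greatest) auto
    then have "exp (ln (G / r)) \<le> exp d" by simp
    then have "G / r \<le> exp d" using G False r by simp
    then show ?thesis
      using r G by (simp add: r_def exp_minus field_simps)
  qed
qed

lemma thompson_nonneg: "0 \<le> thompson X Y"
  unfolding thompson_def by (rule Inf_greatest) auto

theorem theorem3:
  fixes X Y :: "complex mat" and n :: nat and p :: ereal
  assumes "X \<in> carrier_mat n n" and "Y \<in> carrier_mat n n"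
    and "hermitian X" and "hermitian Y"
    and "thompson X Y \<noteq> \<infinity>"
    and "1 \<le> p"
  shows "schatten_norm p (X - Y) \<le>
    two_pow_inv p * ((exp (real_of_ereal (thompson X Y)) - 1) / exp (real_of_ereal (thompson X Y)))
      * max (schatten_norm p X) (schatten_norm p Y)"
proof -
  obtain d where d: "thompson X Y = ereal d"
    using assms(5) thompson_nonneg[of X Y] by (cases "thompson X Y") auto
  define G where "G = two_pow_inv p * max (schatten_norm p X) (schatten_norm p Y)"
  have G: "0 \<le> G"
    unfolding G_def two_pow_inv_def using schatten_norm_nonneg by (simp add: le_max_iff_disj)
  have "schatten_norm p (X - Y) \<le> G * (1 - 1 / \<alpha>)"
    if "\<alpha> \<in> {\<alpha>. 1 \<le> \<alpha> \<and> loewner_le X (complex_of_real \<alpha> \<cdot>\<^sub>m Y) \<and>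
      loewner_le Y (complex_of_real \<alpha> \<cdot>\<^sub>m X)}" for \<alpha>
    using schatten_norm_diff_le_of_loewner[of X n Y \<alpha> p] assms that by (simp add: G_def mult_ac)
  then have "schatten_norm p (X - Y) \<le> G * (1 - exp (- d))"
    using le_one_minus_exp_neg_Inf_ln[OF d[unfolded thompson_def] _ _ G] by force
  moreover have "(exp d - 1) / exp d = 1 - exp (- d)"
    by (simp add: field_simps exp_minus)
  ultimately show ?thesis using d by (simp add: G_def mult_ac)
qed

end
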